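(* Let $\mathcal{L}$ be the Lie algebra over $\mathbb{C}$ with basis $\{D(s):s\in\mathbb{Z}\}$ and bracket $$[D(s),D(m)]=(m-s)D(s+m)-mD(m)+sD(s).$$ For $m\ge 0$ set $$y_m=\sum_{k=0}^{m+1}(-1)^{m+1-k}\binom{m+1}{k}D(-1+k).$$ (a) For $m\ge 0$, $[D(-1),y_m]=-m\,y_m$. (b) For $m,k\ge 0$, $[y_k,y_m]=(m-k)\,y_{m+k}$.
   Context: $y_m$ is the $(m+1)$-st iterated difference derivative $\partial^{m+1}D$ evaluated at $-1$, where $\partial f(s)=f(s+1)-f(s)$. *)

theory Defs
  imports Complex_Main "HOL-Library.Poly_Mapping"
begin

text \<open>Elements of the Lie algebra L: finitely supported coefficient functions on the basis
  D(s), s in Z, i.e. the free complex vector space with basis indexed by int.\<close>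
type_synonym LA = "int \<Rightarrow>\<^sub>0 complex"

definition D :: "int \<Rightarrow> LA" where
  "D s = Poly_Mapping.single s 1"

definition sc :: "complex \<Rightarrow> LA \<Rightarrow> LA" where
  "sc c x = Poly_Mapping.map (\<lambda>v. c * v) x"

definition brD :: "int \<Rightarrow> int \<Rightarrow> LA" where
  "brD s m = sc (of_int (m - s)) (D (s + m)) - sc (of_int m) (D m) + sc (of_int s) (D s)"

definition br :: "LA \<Rightarrow> LA \<Rightarrow> LA" where
  "br x z = (\<Sum>s\<in>Poly_Mapping.keys x. \<Sum>m\<in>Poly_Mapping.keys z. sc (Poly_Mapping.lookup x s * Poly_Mapping.lookup z m) (brD s m))"

definition y :: "nat \<Rightarrow> LA" where
  "y m = (\<Sum>k=0..m+1. sc ((-1) ^ (m + 1 - k) * of_nat ((m + 1) choose k)) (D (int k - 1)))"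

end

theory Submission
  imports Defs "HOL-Computational_Algebra.Polynomial"
begin

(* Identify the span of the D(s), s \<ge> -1, with C[x] by sending D(s) to x^(s+1). The bracket
   then becomes
     [p, q] = p q' - p' q - p(1) (x q' - q) + q(1) (x p' - p),
   D(-1) becomes 1 and y_m becomes (x - 1)^(m+1). For polynomials vanishing at 1 the bracket is
   the Wronskian p q' - p' q, which gives (b) at once, and [1, q] = q - (x - 1) q', which
   gives (a). *)

lemma lookup_sc [simp]: "Poly_Mapping.lookup (sc c x) k = c * Poly_Mapping.lookup x k"
  unfolding sc_def by (simp add: Poly_Mapping.map.rep_eq when_def)

lemma sc_add_left: "sc (a + b) x = sc a x + sc b x"
  by (rule poly_mapping_eqI) (simp add: lookup_add algebra_simps)

lemma sc_zero [simp]: "sc 0 x = 0" "sc c 0 = 0"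
  by (rule poly_mapping_eqI, simp)+

lemma sc_one [simp]: "sc 1 x = x"
  by (rule poly_mapping_eqI) simp

lemma br_eq_sum_over_supersets:
  assumes "finite A" "finite B" "Poly_Mapping.keys x \<subseteq> A" "Poly_Mapping.keys z \<subseteq> B"
  shows "br x z = (\<Sum>s\<in>A. \<Sum>m\<in>B. sc (Poly_Mapping.lookup x s * Poly_Mapping.lookup z m) (brD s m))"
proof -
  have "br x z = (\<Sum>s\<in>A. \<Sum>m\<in>Poly_Mapping.keys z.
                    sc (Poly_Mapping.lookup x s * Poly_Mapping.lookup z m) (brD s m))"
    unfolding br_def
    by (rule sum.mono_neutral_left) (use assms in \<open>auto simp: in_keys_iff\<close>)
  also have "\<dots> = (\<Sum>s\<in>A. \<Sum>m\<in>B. sc (Poly_Mapping.lookup x s * Poly_Mapping.lookup z m) (brD s m))"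
    by (rule sum.cong[OF refl], rule sum.mono_neutral_left)
       (use assms in \<open>auto simp: in_keys_iff\<close>)
  finally show ?thesis .
qed

lemma br_add_left: "br (x + x') z = br x z + br x' z"
proof -
  let ?A = "Poly_Mapping.keys x \<union> Poly_Mapping.keys x'" and ?B = "Poly_Mapping.keys z"
  have "finite ?A" by simp
  moreover have "Poly_Mapping.keys (x + x') \<subseteq> ?A" by (simp add: keys_add)
  ultimately show ?thesis
    by (simp add: br_eq_sum_over_supersets[of ?A ?B] lookup_add algebra_simps sc_add_left
        sum.distrib[symmetric])
qed

lemma br_add_right: "br x (z + z') = br x z + br x z'"
proof -
  let ?A = "Poly_Mapping.keys x" and ?B = "Poly_Mapping.keys z \<union> Poly_Mapping.keys z'"
  have "finite ?B" by simp
  moreover have "Poly_Mapping.keys (z + z') \<subseteq> ?B" by (simp add: keys_add)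
  ultimately show ?thesis
    by (simp add: br_eq_sum_over_supersets[of ?A ?B] lookup_add algebra_simps sc_add_left
        sum.distrib[symmetric])
qed

lemma br_zero [simp]: "br 0 z = 0" "br x 0 = 0"
  unfolding br_def by simp_all

lemma br_sum_left: "finite A \<Longrightarrow> br (sum f A) z = (\<Sum>a\<in>A. br (f a) z)"
  by (induction A rule: finite_induct) (simp_all add: br_add_left)

lemma br_sum_right: "finite A \<Longrightarrow> br x (sum f A) = (\<Sum>a\<in>A. br x (f a))"
  by (induction A rule: finite_induct) (simp_all add: br_add_right)

lemma keys_sc_D: "Poly_Mapping.keys (sc a (D s)) \<subseteq> {s}"
  by (auto simp: in_keys_iff D_def lookup_single)

lemma br_sc_D: "br (sc a (D s)) (sc b (D m)) = sc (a * b) (brD s m)"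
  by (subst br_eq_sum_over_supersets[OF _ _ keys_sc_D keys_sc_D]) (simp_all add: D_def)

definition poly_LA :: "complex poly \<Rightarrow> LA" where
  "poly_LA p = (\<Sum>i\<le>degree p. sc (coeff p i) (D (int i - 1)))"

lemma lookup_poly_LA:
  "Poly_Mapping.lookup (poly_LA p) k = (if k \<ge> -1 then coeff p (nat (k + 1)) else 0)"
proof -
  have "Poly_Mapping.lookup (poly_LA p) k =
          (\<Sum>i\<le>degree p. coeff p i * (if i = nat (k + 1) \<and> k \<ge> -1 then 1 else 0))"
    unfolding poly_LA_def lookup_sum
    by (intro sum.cong refl) (auto simp: D_def lookup_single when_def)
  also have "\<dots> = (if k \<ge> -1 then coeff p (nat (k + 1)) else 0)"
    by (auto simp: if_distrib coeff_eq_0 cong: if_cong)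
  finally show ?thesis .
qed

lemma poly_LA_add: "poly_LA (p + q) = poly_LA p + poly_LA q"
  by (rule poly_mapping_eqI) (simp add: lookup_poly_LA lookup_add)

lemma poly_LA_smult: "poly_LA (smult c p) = sc c (poly_LA p)"
  by (rule poly_mapping_eqI) (simp add: lookup_poly_LA)

lemma poly_LA_zero [simp]: "poly_LA 0 = 0"
  by (rule poly_mapping_eqI) (simp add: lookup_poly_LA)

lemma poly_LA_sum: "finite A \<Longrightarrow> poly_LA (sum f A) = (\<Sum>a\<in>A. poly_LA (f a))"
  by (induction A rule: finite_induct) (simp_all add: poly_LA_add)

lemma poly_LA_monom: "poly_LA (monom a i) = sc a (D (int i - 1))"
  by (rule poly_mapping_eqI) (auto simp: lookup_poly_LA D_def lookup_single when_def coeff_monom)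

lemma poly_LA_one: "poly_LA 1 = D (-1)"
  using poly_LA_monom[of 1 0] by (simp add: monom_altdef one_pCons)

lemma y_eq_poly_LA: "y m = poly_LA ([:-1, 1:] ^ (m + 1))"
proof -
  have "[:-1, 1:] ^ (m + 1) = (monom (1::complex) 1 + [:-1:]) ^ (m + 1)"
    by (simp add: monom_altdef)
  also have "\<dots> = (\<Sum>k\<le>m + 1. monom ((-1) ^ (m + 1 - k) * of_nat ((m + 1) choose k)) k)"
    unfolding binomial_ring
    by (intro sum.cong refl) (simp add: monom_altdef poly_const_pow of_nat_poly mult_ac)
  finally have expansion: "[:-1, 1:] ^ (m + 1) =
      (\<Sum>k\<le>m + 1. monom ((-1) ^ (m + 1 - k) * (of_nat ((m + 1) choose k) :: complex)) k)" .
  show ?thesis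
    unfolding y_def expansion poly_LA_sum[OF finite_atMost] poly_LA_monom atLeast0AtMost ..
qed

definition poly_br :: "complex poly \<Rightarrow> complex poly \<Rightarrow> complex poly" where
  "poly_br p q = p * pderiv q - pderiv p * q
     - smult (poly p 1) (monom 1 1 * pderiv q - q) + smult (poly q 1) (monom 1 1 * pderiv p - p)"

lemma poly_br_add_left: "poly_br (p + p') q = poly_br p q + poly_br p' q"
  unfolding poly_br_def by (simp add: pderiv_add algebra_simps smult_add_left smult_add_right
      smult_diff_right)

lemma poly_br_add_right: "poly_br p (q + q') = poly_br p q + poly_br p q'"
  unfolding poly_br_def by (simp add: pderiv_add algebra_simps smult_add_left smult_add_right
      smult_diff_right)

lemma poly_br_zero [simp]: "poly_br 0 q = 0" "poly_br p 0 = 0"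
  unfolding poly_br_def by simp_all

lemma poly_br_sum_left: "finite A \<Longrightarrow> poly_br (sum f A) q = (\<Sum>a\<in>A. poly_br (f a) q)"
  by (induction A rule: finite_induct) (simp_all add: poly_br_add_left)

lemma poly_br_sum_right: "finite A \<Longrightarrow> poly_br p (sum f A) = (\<Sum>a\<in>A. poly_br p (f a))"
  by (induction A rule: finite_induct) (simp_all add: poly_br_add_right)

lemma poly_LA_poly_br_monom:
  "poly_LA (poly_br (monom a i) (monom b j)) = sc (a * b) (brD (int i - 1) (int j - 1))"
  by (rule poly_mapping_eqI, unfold brD_def poly_br_def, cases i; cases j)
     (auto simp: lookup_poly_LA lookup_add lookup_minus pderiv_monom mult_monom coeff_monom
        D_def lookup_single when_def poly_monom algebra_simps)

lemma br_poly_LA: "br (poly_LA p) (poly_LA q) = poly_LA (poly_br p q)"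
proof -
  let ?mp = "\<lambda>i. monom (coeff p i) i" and ?mq = "\<lambda>j. monom (coeff q j) j"
  have "br (poly_LA p) (poly_LA q) =
          br (poly_LA (\<Sum>i\<le>degree p. ?mp i)) (poly_LA (\<Sum>j\<le>degree q. ?mq j))"
    by (simp only: poly_as_sum_of_monoms)
  also have "\<dots> = (\<Sum>i\<le>degree p. \<Sum>j\<le>degree q. poly_LA (poly_br (?mp i) (?mq j)))"
    by (simp add: poly_LA_sum br_sum_left br_sum_right poly_LA_monom br_sc_D
        poly_LA_poly_br_monom)
       (rule sum.swap)
  also have "\<dots> = poly_LA (poly_br (\<Sum>i\<le>degree p. ?mp i) (\<Sum>j\<le>degree q. ?mq j))"
    by (simp add: poly_LA_sum poly_br_sum_left poly_br_sum_right) (rule sum.swap)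
  finally show ?thesis by (simp only: poly_as_sum_of_monoms)
qed

lemma poly_br_vanishing_at_1:
  "poly p 1 = 0 \<Longrightarrow> poly q 1 = 0 \<Longrightarrow> poly_br p q = p * pderiv q - pderiv p * q"
  unfolding poly_br_def by simp

lemma poly_br_one_left:
  assumes "poly q 1 = 0"
  shows "poly_br 1 q = q - [:-1, 1:] * pderiv q"
proof -
  have "monom 1 1 = [:-1, 1:] + (1 :: complex poly)"
    by (simp add: monom_altdef one_pCons)
  with assms show ?thesis
    unfolding poly_br_def by (simp add: algebra_simps)
qed

lemma power_minus_mult_pderiv_power:
  fixes L :: "'a::idom poly"
  assumes "pderiv L = 1"
  shows "L ^ (m + 1) - L * pderiv (L ^ (m + 1)) = smult (- of_nat m) (L ^ (m + 1))"
proof -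
  have "L * pderiv (L ^ (m + 1)) = smult (1 + of_nat m) (L ^ (m + 1))"
    using pderiv_power_Suc[of L m] assms by (simp add: mult_smult_right)
  then show ?thesis by (simp add: algebra_simps smult_add_left)
qed

lemma wronskian_powers:
  fixes L :: "'a::idom poly"
  assumes "pderiv L = 1"
  shows "L ^ (k + 1) * pderiv (L ^ (m + 1)) - pderiv (L ^ (k + 1)) * L ^ (m + 1)
           = smult (of_int (int m - int k)) (L ^ (m + k + 1))"
proof -
  have "L ^ (k + 1) * pderiv (L ^ (m + 1)) = smult (1 + of_nat m) (L ^ (m + k + 1))"
    using pderiv_power_Suc[of L m] assms by (simp add: mult_smult_right power_add mult_ac)
  moreover have "pderiv (L ^ (k + 1)) * L ^ (m + 1) = smult (1 + of_nat k) (L ^ (m + k + 1))"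
    using pderiv_power_Suc[of L k] assms by (simp add: mult_smult_left power_add mult_ac)
  ultimately show ?thesis by (simp add: smult_diff_left[symmetric])
qed

lemma pderiv_shift: "pderiv [:-1, 1:] = (1 :: complex poly)"
  by (simp add: pderiv_pCons one_pCons)

lemma poly_shift_power_at_1: "poly ([:-1, 1:] ^ (m + 1)) 1 = (0 :: complex)"
  by (simp add: poly_power)

theorem lemma4:
  shows "(\<forall>m::nat. br (D (-1)) (y m) = sc (- of_nat m) (y m))
       \<and> (\<forall>k m::nat. br (y k) (y m) = sc (of_int (int m - int k)) (y (m + k)))"
proof (intro conjI allI)
  fix m :: nat
  show "br (D (-1)) (y m) = sc (- of_nat m) (y m)"
    unfolding y_eq_poly_LA poly_LA_one[symmetric] br_poly_LA
      poly_br_one_left[OF poly_shift_power_at_1] power_minus_mult_pderiv_power[OF pderiv_shift]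
    by (rule poly_LA_smult)
next
  fix k m :: nat
  show "br (y k) (y m) = sc (of_int (int m - int k)) (y (m + k))"
    unfolding y_eq_poly_LA br_poly_LA
      poly_br_vanishing_at_1[OF poly_shift_power_at_1 poly_shift_power_at_1]
      wronskian_powers[OF pderiv_shift]
    by (rule poly_LA_smult)
qed

end
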